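(* For every integer $n\ge0$ and every $x>0$, $$\frac{2n}{x}+\frac{i_{n+1}(x)}{i_n(x)}-\frac{k_{n+1}(x)}{k_n(x)}<0 .$$
   Context: $i_n(x)=\sqrt{\frac{\pi}{2x}}\,I_{n+1/2}(x)$ and $k_n(x)=\sqrt{\frac{2}{\pi x}}\,K_{n+1/2}(x)$ are the modified spherical Bessel functions of the first and second kind, where $I_\nu$ and $K_\nu$ are the modified Bessel functions of the first and second kind. *)

theory Defs
  imports "HOL-Analysis.Analysis"
begin

text \<open>Modified Bessel function of the first kind (power series, DLMF 10.25.2),
  written with the reciprocal Gamma function so that it is defined for every real order.\<close>
definition bessel_I :: "real \<Rightarrow> real \<Rightarrow> real" where
  "bessel_I \<nu> x = (\<Sum>m. (x / 2) powr (2 * real m + \<nu>) * rGamma (real m + \<nu> + 1) / fact m)"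

text \<open>Modified Bessel function of the second kind for non-integer order (DLMF 10.27.4);
  only half-integer orders are used below.\<close>
definition bessel_K :: "real \<Rightarrow> real \<Rightarrow> real" where
  "bessel_K \<nu> x = pi / 2 * (bessel_I (- \<nu>) x - bessel_I \<nu> x) / sin (\<nu> * pi)"

definition sph_i :: "nat \<Rightarrow> real \<Rightarrow> real" where
  "sph_i n x = sqrt (pi / (2 * x)) * bessel_I (real n + 1/2) x"

definition sph_k :: "nat \<Rightarrow> real \<Rightarrow> real" where
  "sph_k n x = sqrt (2 / (pi * x)) * bessel_K (real n + 1/2) x"

end

theory Submission
  imports Defs
begin

(* Put a_n = x i_{n+1}(x) / i_n(x) and b_n = x k_{n+1}(x) / k_n(x). The three-term recurrences
   of i_n and k_n become a_n (2n + 3 + a_{n+1}) = x^2 and b_{n+1} = x^2 / b_n + 2n + 3 with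
   b_0 = x + 1 (from k_0(x) = e^{-x} / x), and the claim reads 2n + a_n - b_n < 0.
   With X_n = sqrt (x^2 + n^2) one has x^2 / (n + X_n) = X_n - n. Descending induction in steps
   of two, anchored where X_n <= n + 3, gives a_n <= X_n - n; ascending induction gives
   n + 1 + X_n <= b_n <= n + 1 + X_{n+1}. Hence 2n + a_n - b_n <= -1. *)

section \<open>Bounds for the ratio recurrences\<close>

lemma sqrt_sum_squares_minus_eq:
  fixes x n :: real
  assumes "0 \<le> n"
  shows "sqrt (x\<^sup>2 + n\<^sup>2) - n = x\<^sup>2 / (n + sqrt (x\<^sup>2 + n\<^sup>2))"
proof (cases "x = 0")
  case True
  then show ?thesis
    using assms by simp
next
  case False
  then have "n < sqrt (x\<^sup>2 + n\<^sup>2)"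
    by (intro real_less_rsqrt) simp
  moreover have "(sqrt (x\<^sup>2 + n\<^sup>2))\<^sup>2 = x\<^sup>2 + n\<^sup>2"
    by simp
  ultimately show ?thesis
    using assms by (simp add: field_simps power2_eq_square)
qed

lemma sqrt_sum_squares_minus_le_divide:
  fixes x n :: real
  assumes n: "0 \<le> n"
  shows "sqrt (x\<^sup>2 + n\<^sup>2) - n - 3 \<le> x\<^sup>2 / (n + 3 + sqrt (x\<^sup>2 + (n + 2)\<^sup>2))"
proof -
  define A B where "A = sqrt (x\<^sup>2 + n\<^sup>2)" and "B = sqrt (x\<^sup>2 + (n + 2)\<^sup>2)"
  have A2: "A\<^sup>2 = x\<^sup>2 + n\<^sup>2" and B2: "B\<^sup>2 = x\<^sup>2 + (n + 2)\<^sup>2"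
    by (simp_all add: A_def B_def)
  have "0 \<le> A" "A \<le> B"
    unfolding A_def B_def using n by (auto intro!: real_sqrt_le_mono power_mono)
  have "(A - n - 3) * (n + 3 + B) \<le> x\<^sup>2"
  proof (cases "A \<le> n + 3")
    case True
    then have "(A - n - 3) * (n + 3 + B) \<le> 0"
      using n \<open>0 \<le> A\<close> \<open>A \<le> B\<close> by (intro mult_nonpos_nonneg) auto
    then show ?thesis
      using zero_le_power2 [of x] by linarith
  next
    case False
    have "(A - n - 3) * (B - A) \<le> (B + A) * (B - A)"
      using False n \<open>A \<le> B\<close> by (intro mult_right_mono) auto
    also have "\<dots> = 4 * n + 4"
      using A2 B2 by (simp add: algebra_simps power2_eq_square)
    finally have "(A - n - 3) * (B - A) \<le> 4 * n + 4" .
    moreover have "(A - n - 3) * (n + 3 + B) = (A - n - 3) * (B - A) + x\<^sup>2 - 6 * n - 9"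
      using A2 by (simp add: algebra_simps power2_eq_square)
    ultimately show ?thesis
      using n by linarith
  qed
  moreover have "0 < n + 3 + B"
    using n \<open>0 \<le> A\<close> \<open>A \<le> B\<close> by linarith
  ultimately show ?thesis
    unfolding A_def B_def by (simp add: pos_le_divide_eq)
qed

lemma divide_le_sqrt_sum_squares_minus:
  fixes x n :: real
  assumes n: "0 \<le> n"
  shows "x\<^sup>2 / (n + 1 + sqrt (x\<^sup>2 + n\<^sup>2)) \<le> sqrt (x\<^sup>2 + (n + 2)\<^sup>2) - n - 1"
proof -
  define A B where "A = sqrt (x\<^sup>2 + n\<^sup>2)" and "B = sqrt (x\<^sup>2 + (n + 2)\<^sup>2)"
  have A2: "A\<^sup>2 = x\<^sup>2 + n\<^sup>2" and B2: "B\<^sup>2 = x\<^sup>2 + (n + 2)\<^sup>2"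
    by (simp_all add: A_def B_def)
  have "n \<le> A" "A \<le> B"
    unfolding A_def B_def using n by (auto intro!: real_le_rsqrt real_sqrt_le_mono power_mono)
  have "(A + 2)\<^sup>2 = A\<^sup>2 + 4 * A + 4" "(n + 2)\<^sup>2 = n\<^sup>2 + 4 * n + 4"
    by (simp_all add: power2_eq_square algebra_simps)
  then have "B\<^sup>2 \<le> (A + 2)\<^sup>2"
    using A2 B2 \<open>n \<le> A\<close> by linarith
  then have "B \<le> A + 2"
    by (rule power2_le_imp_le) (use \<open>n \<le> A\<close> n in linarith)
  have "(B - A) * (B + A) = 4 * n + 4"
    using A2 B2 by (simp add: algebra_simps power2_eq_square)
  moreover have "(B - A) * (B + A) \<le> (B - A) * (2 * (A + n + 1))"
    using \<open>A \<le> B\<close> \<open>B \<le> A + 2\<close> n by (intro mult_left_mono) auto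
  ultimately have "2 * n + 1 \<le> (B - A) * (A + n + 1)"
    by linarith
  moreover have "(B - n - 1) * (n + 1 + A) = (B - A) * (A + n + 1) + x\<^sup>2 - 2 * n - 1"
    using A2 by (simp add: algebra_simps power2_eq_square)
  ultimately have "x\<^sup>2 \<le> (B - n - 1) * (n + 1 + A)"
    by linarith
  moreover have "0 < n + 1 + A"
    using n \<open>n \<le> A\<close> by linarith
  ultimately show ?thesis
    unfolding A_def B_def by (simp add: pos_divide_le_eq)
qed

lemma backward_recurrence_upper_bound:
  fixes a :: "nat \<Rightarrow> real"
  assumes pos: "\<And>n. a n > 0"
    and rec: "\<And>n. a n * (2 * real n + 3 + a (Suc n)) = x\<^sup>2"
  shows "a n \<le> sqrt (x\<^sup>2 + (real n)\<^sup>2) - real n"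
proof -
  let ?X = "\<lambda>k. sqrt (x\<^sup>2 + (real k)\<^sup>2)"
  have a_eq: "a k = x\<^sup>2 / (2 * real k + 3 + a (Suc k))" for k
    using rec [of k] pos [of "Suc k"] by (simp add: eq_divide_eq add_pos_pos)
  have "x \<noteq> 0"
    using rec [of 0] pos [of 0] pos [of 1] by auto
  then have "0 < real k + ?X k" for k
    using real_less_rsqrt [of "real k" "x\<^sup>2 + (real k)\<^sup>2"] by simp
  have step: "a k \<le> ?X k - real k" if "?X k - real k - 3 \<le> a (Suc k)" for k
  proof -
    have "x\<^sup>2 / (2 * real k + 3 + a (Suc k)) \<le> x\<^sup>2 / (real k + ?X k)"
      using that \<open>0 < real k + ?X k\<close> by (intro divide_left_mono) auto
    then show ?thesis
      using a_eq [of k] sqrt_sum_squares_minus_eq [of "real k" x] by simp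
  qed
  show ?thesis
  proof (induction "nat \<lceil>x\<^sup>2\<rceil> - n" arbitrary: n rule: less_induct)
    case less
    show ?case
    proof (cases "?X n \<le> real n + 3")
      case True
      then show ?thesis
        using step pos [of "Suc n"] by force
    next
      case False
      then have "\<not> x\<^sup>2 + (real n)\<^sup>2 \<le> (real n + 3)\<^sup>2"
        using real_sqrt_le_mono [of "x\<^sup>2 + (real n)\<^sup>2" "(real n + 3)\<^sup>2"] by auto
      then have "n < nat \<lceil>x\<^sup>2\<rceil>"
        by (simp add: power2_eq_square algebra_simps) linarith
      then have "a (Suc (Suc n)) \<le> ?X (Suc (Suc n)) - real (Suc (Suc n))"
        by (intro less) auto
      then have "2 * real (Suc n) + 3 + a (Suc (Suc n)) \<le> real n + 3 + ?X (Suc (Suc n))"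
        by simp
      then have "x\<^sup>2 / (real n + 3 + ?X (Suc (Suc n))) \<le> a (Suc n)"
        unfolding a_eq [of "Suc n"] using pos [of "Suc (Suc n)"] by (intro divide_left_mono) auto
      moreover have "?X n - real n - 3 \<le> x\<^sup>2 / (real n + 3 + ?X (Suc (Suc n)))"
        using sqrt_sum_squares_minus_le_divide [of "real n" x] by (simp add: add.commute)
      ultimately show ?thesis
        by (intro step) linarith
    qed
  qed
qed

lemma forward_recurrence_bounds:
  fixes b :: "nat \<Rightarrow> real"
  assumes x: "x > 0" and b0: "b 0 = x + 1"
    and rec: "\<And>n. b (Suc n) = x\<^sup>2 / b n + (2 * real n + 3)"
  shows "real n + 1 + sqrt (x\<^sup>2 + (real n)\<^sup>2) \<le> b n
    \<and> b n \<le> real n + 1 + sqrt (x\<^sup>2 + (real n + 1)\<^sup>2)"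
proof (induction n)
  case 0
  have "x \<le> sqrt (x\<^sup>2 + 1)"
    by (rule real_le_rsqrt) simp
  then show ?case
    using x b0 by simp
next
  case (Suc n)
  let ?X = "\<lambda>t. sqrt (x\<^sup>2 + t\<^sup>2)"
  have "0 < real n + 1 + ?X (real n)"
    by (simp add: add_pos_nonneg)
  then have "x\<^sup>2 / (real n + 1 + ?X (real n + 1)) \<le> x\<^sup>2 / b n"
    "x\<^sup>2 / b n \<le> x\<^sup>2 / (real n + 1 + ?X (real n))"
    using Suc by (auto intro!: divide_left_mono mult_pos_pos)
  moreover have "x\<^sup>2 / (real n + 1 + ?X (real n + 1)) = ?X (real n + 1) - (real n + 1)"
    using sqrt_sum_squares_minus_eq [of "real n + 1" x] by simp
  moreover have "x\<^sup>2 / (real n + 1 + ?X (real n)) \<le> ?X (real n + 2) - real n - 1"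
    using divide_le_sqrt_sum_squares_minus [of "real n" x] by simp
  ultimately show ?case
    unfolding rec by (simp add: algebra_simps)
qed

section \<open>Modified Bessel functions\<close>

definition bessel_I_term :: "real \<Rightarrow> real \<Rightarrow> nat \<Rightarrow> real" where
  "bessel_I_term \<nu> x m = (x / 2) powr (2 * real m + \<nu>) * rGamma (real m + \<nu> + 1) / fact m"

lemma bessel_I_eq_suminf: "bessel_I \<nu> x = (\<Sum>m. bessel_I_term \<nu> x m)"
  unfolding bessel_I_def bessel_I_term_def ..

lemma bessel_I_term_order_shift:
  assumes "x > 0"
  shows "bessel_I_term \<nu> x m = 2 * (real m + \<nu> + 1) / x * bessel_I_term (\<nu> + 1) x m"
proof -
  have P: "(x / 2) powr (2 * real m + (\<nu> + 1)) = (x / 2) powr (2 * real m + \<nu>) * (x / 2)"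
    using assms powr_add [of "x / 2" "2 * real m + \<nu>" 1] by (simp add: add.assoc)
  have G: "rGamma (real m + \<nu> + 1) = (real m + \<nu> + 1) * rGamma (real m + (\<nu> + 1) + 1)"
    using rGamma_plus1 [of "real m + \<nu> + 1"] by (simp add: add.assoc)
  show ?thesis
    unfolding bessel_I_term_def P G using assms by (simp add: field_simps)
qed

lemma bessel_I_term_Suc:
  assumes "x > 0"
  shows "bessel_I_term (\<nu> - 1) x (Suc m) = x / (2 * (real m + 1)) * bessel_I_term \<nu> x m"
proof -
  have P: "(x / 2) powr (2 * real (Suc m) + (\<nu> - 1)) = (x / 2) powr (2 * real m + \<nu>) * (x / 2)"
    using assms powr_add [of "x / 2" "2 * real m + \<nu>" 1] by (simp add: algebra_simps)
  have G: "rGamma (real (Suc m) + (\<nu> - 1) + 1) = rGamma (real m + \<nu> + 1)"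
    by (simp add: algebra_simps)
  show ?thesis
    unfolding bessel_I_term_def P G fact_Suc using assms by (simp add: field_simps)
qed

lemma summable_bessel_I_term:
  assumes x: "x > 0"
  shows "summable (bessel_I_term \<nu> x)"
proof (rule summable_ratio_test [of "1 / 2" "nat \<lceil>x\<^sup>2 + \<bar>\<nu>\<bar>\<rceil>"])
  fix m assume "m \<ge> nat \<lceil>x\<^sup>2 + \<bar>\<nu>\<bar>\<rceil>"
  then have "real m \<ge> x\<^sup>2 + \<bar>\<nu>\<bar>"
    by linarith
  then have large: "x\<^sup>2 + 1 \<le> real m + \<nu> + 1"
    by linarith
  have nonneg: "0 \<le> real m + \<nu> + 1"
    using large zero_le_power2 [of x] by linarith
  then have "real m + \<nu> + 1 \<le> (real m + 1) * (real m + \<nu> + 1)"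
    using mult_right_mono [of 1 "real m + 1" "real m + \<nu> + 1"] by simp
  then have "x\<^sup>2 \<le> 2 * ((real m + 1) * (real m + \<nu> + 1))"
    using large zero_le_power2 [of x] by linarith
  then have ratio: "x / (2 * (real m + 1)) \<le> (real m + \<nu> + 1) / x"
    using x by (simp add: divide_simps power2_eq_square algebra_simps)
  define t where "t = bessel_I_term (\<nu> + 1) x m"
  have "norm (bessel_I_term \<nu> x (Suc m)) = x / (2 * (real m + 1)) * \<bar>t\<bar>"
    using bessel_I_term_Suc [OF x, of "\<nu> + 1" m] x by (simp add: t_def abs_mult)
  also have "\<dots> \<le> (real m + \<nu> + 1) / x * \<bar>t\<bar>"
    using ratio by (rule mult_right_mono) simp
  also have "\<dots> = 1 / 2 * (2 * (real m + \<nu> + 1) / x * \<bar>t\<bar>)"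
    using x by (simp add: field_simps)
  also have "\<dots> = 1 / 2 * norm (bessel_I_term \<nu> x m)"
    using bessel_I_term_order_shift [OF x, of \<nu> m] x nonneg by (simp add: t_def abs_mult)
  finally show "norm (bessel_I_term \<nu> x (Suc m)) \<le> 1 / 2 * norm (bessel_I_term \<nu> x m)" .
qed simp

lemma bessel_I_term_pos:
  assumes "x > 0" and "\<nu> > -1"
  shows "bessel_I_term \<nu> x m > 0"
  using assms by (simp add: bessel_I_term_def rGamma_inverse_Gamma)

lemma bessel_I_pos:
  assumes "x > 0" and "\<nu> > -1"
  shows "bessel_I \<nu> x > 0"
  unfolding bessel_I_eq_suminf
  using assms by (intro suminf_pos summable_bessel_I_term bessel_I_term_pos)

lemma bessel_I_recurrence:
  assumes x: "x > 0"
  shows "bessel_I (\<nu> - 1) x = 2 * \<nu> / x * bessel_I \<nu> x + bessel_I (\<nu> + 1) x"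
proof -
  let ?t = bessel_I_term
  have head: "?t (\<nu> - 1) x 0 = 2 * \<nu> / x * ?t \<nu> x 0"
    using bessel_I_term_order_shift [OF x, of "\<nu> - 1" 0] by simp
  have tail: "?t (\<nu> - 1) x (Suc m) = 2 * \<nu> / x * ?t \<nu> x (Suc m) + ?t (\<nu> + 1) x m" for m
  proof -
    have lhs: "?t (\<nu> - 1) x (Suc m)
        = x / (2 * (real m + 1)) * (2 * (real m + \<nu> + 1) / x * ?t (\<nu> + 1) x m)"
      using x by (simp only: bessel_I_term_Suc bessel_I_term_order_shift [OF x, of \<nu> m])
    have rhs: "?t \<nu> x (Suc m) = x / (2 * (real m + 1)) * ?t (\<nu> + 1) x m"
      using bessel_I_term_Suc [OF x, of "\<nu> + 1" m] by simp
    show ?thesis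
      unfolding lhs rhs using x by (simp add: divide_simps) (simp add: algebra_simps)
  qed
  have summable: "summable (?t \<mu> x)" for \<mu>
    using x by (rule summable_bessel_I_term)
  then have summable_tail: "summable (\<lambda>m. ?t \<nu> x (Suc m))"
    by (simp add: summable_Suc_iff)
  have "bessel_I (\<nu> - 1) x = ?t (\<nu> - 1) x 0 + (\<Sum>m. ?t (\<nu> - 1) x (Suc m))"
    unfolding bessel_I_eq_suminf suminf_split_head [OF summable] by simp
  also have "\<dots> = 2 * \<nu> / x * ?t \<nu> x 0
      + ((\<Sum>m. 2 * \<nu> / x * ?t \<nu> x (Suc m)) + (\<Sum>m. ?t (\<nu> + 1) x m))"
    unfolding head tail by (simp only: suminf_add [OF summable_mult [OF summable_tail] summable])
  also have "\<dots> = 2 * \<nu> / x * bessel_I \<nu> x + bessel_I (\<nu> + 1) x"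
    unfolding bessel_I_eq_suminf suminf_mult [OF summable_tail] suminf_split_head [OF summable]
    by (simp add: algebra_simps)
  finally show ?thesis .
qed

lemma bessel_K_minus_order: "bessel_K (- \<nu>) x = bessel_K \<nu> x"
  by (simp add: bessel_K_def divide_simps algebra_simps)

lemma bessel_K_recurrence:
  assumes x: "x > 0"
  shows "bessel_K (\<nu> + 1) x = bessel_K (\<nu> - 1) x + 2 * \<nu> / x * bessel_K \<nu> x"
proof -
  have minus: "bessel_I (- (\<nu> + 1)) x = bessel_I (- (\<nu> - 1)) x - 2 * \<nu> / x * bessel_I (- \<nu>) x"
  proof -
    have "- \<nu> - 1 = - (\<nu> + 1)" "- \<nu> + 1 = - (\<nu> - 1)"
      by simp_all
    then show ?thesis
      using bessel_I_recurrence [OF x, of "- \<nu>"] by simp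
  qed
  have plus: "bessel_I (\<nu> + 1) x = bessel_I (\<nu> - 1) x - 2 * \<nu> / x * bessel_I \<nu> x"
    using bessel_I_recurrence [OF x, of \<nu>] by simp
  have "sin ((\<nu> + 1) * pi) = - sin (\<nu> * pi)" "sin ((\<nu> - 1) * pi) = - sin (\<nu> * pi)"
    by (simp_all add: distrib_right left_diff_distrib sin_add sin_diff)
  \<comment> \<open>For integer \<nu> both sides vanish, by the convention x / 0 = 0.\<close>
  then show ?thesis
    unfolding bessel_K_def minus plus using x
    by (cases "sin (\<nu> * pi) = 0") (simp_all add: field_simps)
qed

lemma bessel_I_term_minus_half_0:
  assumes x: "x > 0"
  shows "bessel_I_term (- (1/2)) x 0 = sqrt (2 / (pi * x))"
proof -
  have "bessel_I_term (- (1/2)) x 0 = inverse ((x / 2) powr (1/2)) * inverse (sqrt pi)"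
    by (simp add: bessel_I_term_def rGamma_inverse_Gamma Gamma_one_half_real powr_minus)
  also have "\<dots> = inverse (sqrt (x / 2) * sqrt pi)"
    using x by (simp add: powr_half_sqrt inverse_mult_distrib)
  also have "\<dots> = inverse (sqrt (x / 2 * pi))"
    by (simp only: real_sqrt_mult)
  also have "\<dots> = sqrt (2 / (pi * x))"
    by (simp add: real_sqrt_inverse [symmetric] mult.commute)
  finally show ?thesis .
qed

lemma bessel_I_term_half_order:
  assumes x: "x > 0"
  shows "bessel_I_term (- (1/2)) x m = sqrt (2 / (pi * x)) * x ^ (2 * m) / fact (2 * m)"
    and "bessel_I_term (1/2) x m = sqrt (2 / (pi * x)) * x ^ (2 * m + 1) / fact (2 * m + 1)"
proof -
  have up: "bessel_I_term (1/2) x k = x / (2 * real k + 1) * bessel_I_term (- (1/2)) x k" for k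
    using bessel_I_term_order_shift [OF x, of "- (1/2)" k] x by (simp add: field_simps)
  have down: "bessel_I_term (- (1/2)) x (Suc k) = x / (2 * real k + 2) * bessel_I_term (1/2) x k"
    for k
    using bessel_I_term_Suc [OF x, of "1/2" k] by (simp add: field_simps)
  show minus_half: "bessel_I_term (- (1/2)) x m = sqrt (2 / (pi * x)) * x ^ (2 * m) / fact (2 * m)"
  proof (induction m)
    case 0
    show ?case
      using bessel_I_term_minus_half_0 [OF x] by simp
  next
    case (Suc k)
    have "fact (2 * Suc k) = (2 * real k + 2) * ((2 * real k + 1) * fact (2 * k))"
      by (simp add: algebra_simps)
    then show ?case
      unfolding down up Suc by (simp add: field_simps)
  qed
  show "bessel_I_term (1/2) x m = sqrt (2 / (pi * x)) * x ^ (2 * m + 1) / fact (2 * m + 1)"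
    unfolding up minus_half by (simp add: field_simps)
qed

lemma bessel_I_half_order_diff:
  assumes x: "x > 0"
  shows "bessel_I (- (1/2)) x - bessel_I (1/2) x = sqrt (2 / (pi * x)) * exp (- x)"
proof -
  define c where "c = sqrt (2 / (pi * x))"
  have "(\<lambda>k. c * ((- x) ^ k / fact k)) sums (c * exp (- x))"
    using exp_converges [of "- x"] by (intro sums_mult) (simp add: divide_inverse mult.commute)
  then have "(\<lambda>m. \<Sum>k\<in>{m * 2..<m * 2 + 2}. c * ((- x) ^ k / fact k)) sums (c * exp (- x))"
    by (rule sums_group) simp
  moreover have "(\<Sum>k\<in>{m * 2..<m * 2 + 2}. c * ((- x) ^ k / fact k))
      = bessel_I_term (- (1/2)) x m - bessel_I_term (1/2) x m" for m
  proof -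
    have "{m * 2..<m * 2 + 2} = {2 * m, 2 * m + 1}"
      by auto
    then show ?thesis
      by (simp add: bessel_I_term_half_order [OF x] c_def)
  qed
  moreover have "(\<lambda>m. bessel_I_term (- (1/2)) x m - bessel_I_term (1/2) x m)
      sums (bessel_I (- (1/2)) x - bessel_I (1/2) x)"
    unfolding bessel_I_eq_suminf by (intro sums_diff summable_sums summable_bessel_I_term x)
  ultimately show ?thesis
    unfolding c_def by (simp add: sums_unique2)
qed

section \<open>Modified spherical Bessel functions\<close>

lemma sph_i_pos:
  assumes "x > 0"
  shows "sph_i n x > 0"
  unfolding sph_i_def using assms by (intro mult_pos_pos bessel_I_pos) auto

lemma sph_i_recurrence:
  assumes x: "x > 0"
  shows "sph_i n x = (2 * real n + 3) / x * sph_i (n + 1) x + sph_i (n + 2) x"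
proof -
  have "real n + 3/2 - 1 = real n + 1/2" "real (n + 1) + 1/2 = real n + 3/2"
    "real (n + 2) + 1/2 = real n + 3/2 + 1" "2 * (real n + 3/2) = 2 * real n + 3"
    by simp_all
  then show ?thesis
    using bessel_I_recurrence [OF x, of "real n + 3/2"]
    by (simp add: sph_i_def algebra_simps)
qed

lemma sph_k_recurrence:
  assumes x: "x > 0"
  shows "sph_k (n + 2) x = sph_k n x + (2 * real n + 3) / x * sph_k (n + 1) x"
proof -
  have "real n + 3/2 - 1 = real n + 1/2" "real (n + 1) + 1/2 = real n + 3/2"
    "real (n + 2) + 1/2 = real n + 3/2 + 1" "2 * (real n + 3/2) = 2 * real n + 3"
    by simp_all
  then show ?thesis
    using bessel_K_recurrence [OF x, of "real n + 3/2"]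
    by (simp add: sph_k_def algebra_simps)
qed

lemma sph_k_0:
  assumes x: "x > 0"
  shows "sph_k 0 x = exp (- x) / x"
proof -
  have "sph_k 0 x = sqrt (2 / (pi * x)) * (pi / 2 * (sqrt (2 / (pi * x)) * exp (- x)))"
    by (simp add: sph_k_def bessel_K_def bessel_I_half_order_diff [OF x])
  also have "\<dots> = pi / 2 * (sqrt (2 / (pi * x)) * sqrt (2 / (pi * x))) * exp (- x)"
    by (simp only: mult_ac)
  also have "\<dots> = exp (- x) / x"
    using x by simp
  finally show ?thesis .
qed

lemma sph_k_1:
  assumes x: "x > 0"
  shows "sph_k 1 x = (x + 1) * exp (- x) / x\<^sup>2"
proof -
  have "bessel_K (1/2 + 1) x = (1 + 1 / x) * bessel_K (1/2) x"
    using bessel_K_recurrence [OF x, of "1/2"] bessel_K_minus_order [of "1/2" x]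
    by (simp add: algebra_simps)
  then have "sph_k 1 x = (1 + 1 / x) * sph_k 0 x"
    by (simp add: sph_k_def)
  then show ?thesis
    using x by (simp add: sph_k_0 field_simps power2_eq_square)
qed

lemma sph_k_pos:
  assumes x: "x > 0"
  shows "sph_k n x > 0"
proof (induction n rule: induct_nat_012)
  case 0
  show ?case
    using x by (simp add: sph_k_0)
next
  case 1
  show ?case
    using x sph_k_1 [OF x] by simp
next
  case (ge2 n)
  then show ?case
    using x sph_k_recurrence [OF x, of n] by (simp add: add_pos_pos)
qed

lemma sph_i_ratio_recurrence:
  assumes x: "x > 0"
  shows "x * sph_i (Suc n) x / sph_i n x
    * (2 * real n + 3 + x * sph_i (Suc (Suc n)) x / sph_i (Suc n) x) = x\<^sup>2"
proof -
  have "(2 * real n + 3) * sph_i (Suc n) x + x * sph_i (Suc (Suc n)) x = x * sph_i n x"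
    using sph_i_recurrence [OF x, of n] x by (simp add: field_simps)
  moreover have "sph_i n x > 0" "sph_i (Suc n) x > 0"
    using sph_i_pos [OF x] by auto
  ultimately show ?thesis
    by (simp add: field_simps power2_eq_square)
qed

lemma sph_k_ratio_recurrence:
  assumes x: "x > 0"
  shows "x * sph_k (Suc (Suc n)) x / sph_k (Suc n) x
    = x\<^sup>2 / (x * sph_k (Suc n) x / sph_k n x) + (2 * real n + 3)"
proof -
  have "sph_k n x > 0" "sph_k (Suc n) x > 0"
    using sph_k_pos [OF x] by auto
  then show ?thesis
    using sph_k_recurrence [OF x, of n] x by (simp add: field_simps power2_eq_square)
qed

theorem lemma3:
  fixes n :: nat and x :: real
  assumes "x > 0"
  shows "2 * real n / x + sph_i (n + 1) x / sph_i n x - sph_k (n + 1) x / sph_k n x < 0"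
proof -
  define a where "a k = x * sph_i (Suc k) x / sph_i k x" for k
  define b where "b k = x * sph_k (Suc k) x / sph_k k x" for k
  have "a k > 0" for k
    unfolding a_def using assms sph_i_pos [OF assms] by simp
  moreover have "a k * (2 * real k + 3 + a (Suc k)) = x\<^sup>2" for k
    unfolding a_def by (rule sph_i_ratio_recurrence [OF assms])
  ultimately have a_le: "a n \<le> sqrt (x\<^sup>2 + (real n)\<^sup>2) - real n"
    by (rule backward_recurrence_upper_bound)
  have "b 0 = x + 1"
    unfolding b_def using assms sph_k_1 [OF assms] by (simp add: sph_k_0 field_simps power2_eq_square)
  moreover have "b (Suc k) = x\<^sup>2 / b k + (2 * real k + 3)" for k
    unfolding b_def by (rule sph_k_ratio_recurrence [OF assms])
  ultimately have b_ge: "real n + 1 + sqrt (x\<^sup>2 + (real n)\<^sup>2) \<le> b n"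
    using forward_recurrence_bounds [OF assms] by blast
  from a_le b_ge have "2 * real n + a n - b n < 0"
    by linarith
  then show ?thesis
    using assms by (simp add: a_def b_def field_simps)
qed

end
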